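(* Let $t\in\mathfrak{T}_2$ with $t>0$ on $\mathbb{T}^2$ and $n_1(t)\ge1$. Then for every $z\in\mathbb{A}_{\sigma_1(t)}$, $$\Re\,\Gamma_zt\ge\tfrac12\min t\ \text{ on }\mathbb{T},\qquad \|\Gamma_zt\|_\infty\le\|t\|_\infty+\tfrac12\min t,\qquad \rho(\Gamma_zt)\ge\rho(t)/(2e).$$
   Context: $\mathbb{T}=\mathbb{R}/\mathbb{Z}$, $e_j(x)=e^{2\pi i jx}$, $e_{(j,k)}(x,y)=e_j(x)e_k(y)$. $\mathfrak{T}_d$: trigonometric polynomials on $\mathbb{T}^d$. For $t\in\mathfrak{T}_2$: $\|\widehat t\|_1=\sum_{(j,k)}|\widehat t(j,k)|$, $n_1(t)=\max\{|j|:\widehat t(j,k)\ne0\text{ for some }k\}$, $\rho(t)=\min\{1,\min t/(2e\|\widehat t\|_1)\}$, $\sigma_1(t)=\rho(t)/n_1(t)$. For $z\in\mathbb{C}\setminus\{0\}$, $\Gamma_z:\mathfrak{T}_2\to\mathfrak{T}_1$ is the linear map with $\Gamma_ze_{(j,k)}=z^je_k$. For $s\in\mathfrak{T}_1$ with $\Re s>0$, $\rho(s)=\min\{1,\min\Re s/(2e\|\widehat s\|_1)\}$ with $\|\widehat s\|_1=\sum_k|\widehat s(k)|$. $\mathbb{A}_\sigma=\{z:e^{-\sigma}\le|z|\le e^\sigma\}$. *)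

theory Defs
  imports "HOL-Analysis.Analysis"
begin

text \<open>A trigonometric polynomial on T^2 is represented by its Fourier coefficient
  function c :: int \<times> int \<Rightarrow> complex with finite support; on T by d :: int \<Rightarrow> complex
  with finite support. Points of T are represented by reals (functions are 1-periodic).\<close>

definition trig2 :: "(int \<times> int \<Rightarrow> complex) \<Rightarrow> bool" where
  "trig2 c \<longleftrightarrow> finite {p. c p \<noteq> 0}"

definition trig1 :: "(int \<Rightarrow> complex) \<Rightarrow> bool" where
  "trig1 d \<longleftrightarrow> finite {k. d k \<noteq> 0}"

definition ee :: "int \<Rightarrow> real \<Rightarrow> complex" where
  "ee j x = exp (2 * pi * \<i> * of_int j * of_real x)"

definition tval2 :: "(int \<times> int \<Rightarrow> complex) \<Rightarrow> real \<Rightarrow> real \<Rightarrow> complex" where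
  "tval2 c x y = (\<Sum>p\<in>{p. c p \<noteq> 0}. c p * ee (fst p) x * ee (snd p) y)"

definition tval1 :: "(int \<Rightarrow> complex) \<Rightarrow> real \<Rightarrow> complex" where
  "tval1 d y = (\<Sum>k\<in>{k. d k \<noteq> 0}. d k * ee k y)"

definition l1norm2 :: "(int \<times> int \<Rightarrow> complex) \<Rightarrow> real" where
  "l1norm2 c = (\<Sum>p\<in>{p. c p \<noteq> 0}. cmod (c p))"

definition l1norm1 :: "(int \<Rightarrow> complex) \<Rightarrow> real" where
  "l1norm1 d = (\<Sum>k\<in>{k. d k \<noteq> 0}. cmod (d k))"

definition n1 :: "(int \<times> int \<Rightarrow> complex) \<Rightarrow> int" where
  "n1 c = Max ((\<lambda>p. \<bar>fst p\<bar>) ` {p. c p \<noteq> 0})"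

text \<open>min t (t real-valued, so we take the real part).\<close>
definition min2 :: "(int \<times> int \<Rightarrow> complex) \<Rightarrow> real" where
  "min2 c = (INF xy. Re (tval2 c (fst xy) (snd xy)))"

definition minRe1 :: "(int \<Rightarrow> complex) \<Rightarrow> real" where
  "minRe1 d = (INF y. Re (tval1 d y))"

definition supnorm2 :: "(int \<times> int \<Rightarrow> complex) \<Rightarrow> real" where
  "supnorm2 c = (SUP xy. cmod (tval2 c (fst xy) (snd xy)))"

definition supnorm1 :: "(int \<Rightarrow> complex) \<Rightarrow> real" where
  "supnorm1 d = (SUP y. cmod (tval1 d y))"

definition rho2 :: "(int \<times> int \<Rightarrow> complex) \<Rightarrow> real" where
  "rho2 c = min 1 (min2 c / (2 * exp 1 * l1norm2 c))"

definition rho1 :: "(int \<Rightarrow> complex) \<Rightarrow> real" where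
  "rho1 d = min 1 (minRe1 d / (2 * exp 1 * l1norm1 d))"

definition sigma1 :: "(int \<times> int \<Rightarrow> complex) \<Rightarrow> real" where
  "sigma1 c = rho2 c / of_int (n1 c)"

text \<open>Gamma_z : e_(j,k) \<mapsto> z^j e_k, on coefficients.\<close>
definition Gamma :: "complex \<Rightarrow> (int \<times> int \<Rightarrow> complex) \<Rightarrow> (int \<Rightarrow> complex)" where
  "Gamma z c = (\<lambda>k. \<Sum>p\<in>{p. c p \<noteq> 0 \<and> snd p = k}. c p * z powi (fst p))"

definition annulus :: "real \<Rightarrow> complex set" where
  "annulus s = {z. exp (- s) \<le> cmod z \<and> cmod z \<le> exp s}"

end

theory Submission
  imports Defs
begin

(*
  Write z = exp (s + 2 pi i x0) with s = ln |z| and x0 = Arg z / (2 pi).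
  Then z^j e_k(y) = exp (j s) e_(j,k)(x0, y), so Gamma_z t is the slice y |-> t(x0, y)
  with every coefficient c(j,k) multiplied by the real factor exp (j s).  On the annulus
  of radius sigma_1(t) = rho(t) / n_1(t) we have |j s| <= rho(t) <= 1, hence
  |exp (j s) - 1| <= rho(t) e and exp (j s) <= e.  The first estimate and the choice of
  rho(t) give |Gamma_z t(y) - t(x0, y)| <= ||t^||_1 rho(t) e <= min t / 2, which yields
  the bounds on Re Gamma_z t and on the sup norm; the second gives
  ||(Gamma_z t)^||_1 <= e ||t^||_1, which together with Re Gamma_z t >= min t / 2 yields
  the bound on rho(Gamma_z t).
*)

lemma norm_ee [simp]: "cmod (ee j x) = 1"
  unfolding ee_def by simp

lemma norm_tval1_le_l1norm1: "cmod (tval1 d y) \<le> l1norm1 d"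
  unfolding tval1_def l1norm1_def
  by (rule order.trans[OF norm_sum]) (simp add: norm_mult)

lemma norm_tval2_le_l1norm2: "cmod (tval2 c x y) \<le> l1norm2 c"
  unfolding tval2_def l1norm2_def
  by (rule order.trans[OF norm_sum]) (simp add: norm_mult)

lemma l1norm1_nonneg: "0 \<le> l1norm1 d"
  unfolding l1norm1_def by (simp add: sum_nonneg)

lemma l1norm2_nonneg: "0 \<le> l1norm2 c"
  unfolding l1norm2_def by (simp add: sum_nonneg)

lemma norm_tval2_le_supnorm2: "cmod (tval2 c x y) \<le> supnorm2 c"
proof -
  have bdd: "bdd_above (range (\<lambda>xy. cmod (tval2 c (fst xy) (snd xy))))"
    by (rule bdd_aboveI[of _ "l1norm2 c"]) (auto simp: norm_tval2_le_l1norm2)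
  show ?thesis
    unfolding supnorm2_def using cSUP_upper[OF _ bdd, of "(x, y)"] by simp
qed

lemma min2_bounds:
  assumes "\<forall>x y. Re (tval2 c x y) > 0"
  shows "0 \<le> min2 c" and "min2 c \<le> Re (tval2 c x y)"
proof -
  have bdd: "bdd_below (range (\<lambda>xy. Re (tval2 c (fst xy) (snd xy))))"
    by (rule bdd_belowI[of _ 0]) (use assms in \<open>auto intro: less_imp_le\<close>)
  show "min2 c \<le> Re (tval2 c x y)"
    unfolding min2_def using cINF_lower[OF bdd, of "(x, y)"] by simp
  show "0 \<le> min2 c"
    unfolding min2_def by (rule cINF_greatest) (use assms in \<open>auto intro: less_imp_le\<close>)
qed

lemma min2_le_l1norm2:
  assumes "\<forall>x y. Re (tval2 c x y) > 0"
  shows "min2 c \<le> l1norm2 c"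
  using min2_bounds(2)[OF assms, of 0 0] abs_Re_le_cmod[of "tval2 c 0 0"]
    norm_tval2_le_l1norm2[of c 0 0] by linarith

lemma rho2_budget:
  assumes "0 \<le> min2 c"
  shows "l1norm2 c * (rho2 c * exp 1) \<le> min2 c / 2"
proof (cases "l1norm2 c = 0")
  case False
  then have "l1norm2 c > 0" using l1norm2_nonneg[of c] by simp
  moreover have "rho2 c \<le> min2 c / (2 * exp 1 * l1norm2 c)"
    unfolding rho2_def by simp
  ultimately show ?thesis by (simp add: pos_le_divide_eq algebra_simps)
qed (use assms in simp)

lemma rho2_le_one: "rho2 c \<le> 1"
  unfolding rho2_def by simp

lemma Gamma_support:
  "{k. Gamma z c k \<noteq> 0} \<subseteq> snd ` {p. c p \<noteq> 0}"
proof
  fix k assume "k \<in> {k. Gamma z c k \<noteq> 0}"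
  moreover have "Gamma z c k = 0" if "{p. c p \<noteq> 0 \<and> snd p = k} = {}"
    unfolding Gamma_def using that by (simp only: sum.empty)
  ultimately have "{p. c p \<noteq> 0 \<and> snd p = k} \<noteq> {}" by blast
  then show "k \<in> snd ` {p. c p \<noteq> 0}" by force
qed

lemma tval1_Gamma:
  assumes "trig2 c"
  shows "tval1 (Gamma z c) y = (\<Sum>p\<in>{p. c p \<noteq> 0}. c p * z powi fst p * ee (snd p) y)"
proof -
  let ?S = "{p. c p \<noteq> 0}"
  have fin: "finite ?S" using assms unfolding trig2_def .
  have "tval1 (Gamma z c) y = (\<Sum>k\<in>snd ` ?S. Gamma z c k * ee k y)"
    unfolding tval1_def by (rule sum.mono_neutral_left) (use fin Gamma_support in auto)
  also have "\<dots> = (\<Sum>k\<in>snd ` ?S. \<Sum>p\<in>{p \<in> ?S. snd p = k}. c p * z powi fst p * ee (snd p) y)"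
    unfolding Gamma_def by (rule sum.cong) (auto simp: sum_distrib_right)
  also have "\<dots> = (\<Sum>p\<in>?S. c p * z powi fst p * ee (snd p) y)"
    by (rule sum.group) (use fin in auto)
  finally show ?thesis .
qed

text \<open>Regrouping the coefficients can only decrease the l1-norm.\<close>

lemma l1norm1_Gamma_le:
  assumes "trig2 c"
  shows "l1norm1 (Gamma z c) \<le> (\<Sum>p\<in>{p. c p \<noteq> 0}. cmod (c p) * cmod (z powi fst p))"
proof -
  let ?S = "{p. c p \<noteq> 0}"
  have fin: "finite ?S" using assms unfolding trig2_def .
  have "l1norm1 (Gamma z c) = (\<Sum>k\<in>snd ` ?S. cmod (Gamma z c k))"
    unfolding l1norm1_def by (rule sum.mono_neutral_left) (use fin Gamma_support in auto)
  also have "\<dots> \<le> (\<Sum>k\<in>snd ` ?S. \<Sum>p\<in>{p \<in> ?S. snd p = k}. cmod (c p) * cmod (z powi fst p))"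
    unfolding Gamma_def
    by (rule sum_mono) (auto intro!: order.trans[OF norm_sum] simp: norm_mult)
  also have "\<dots> = (\<Sum>p\<in>?S. cmod (c p) * cmod (z powi fst p))"
    by (rule sum.group) (use fin in auto)
  finally show ?thesis .
qed

lemma powi_polar:
  assumes "z \<noteq> 0"
  shows "z powi j = complex_of_real (exp (of_int j * ln (cmod z))) * ee j (Arg z / (2 * pi))"
proof -
  define w where "w = complex_of_real (ln (cmod z)) + \<i> * complex_of_real (Arg z)"
  have "z = complex_of_real (cmod z) * exp (\<i> * Arg z)"
    using Arg_eq[OF assms] by simp
  also have "complex_of_real (cmod z) = exp (complex_of_real (ln (cmod z)))"
    using assms by (simp add: exp_of_real)
  finally have "z = exp w" unfolding w_def by (simp add: exp_add)
  then have "z powi j = exp (of_int j * w)" by (simp add: exp_power_int)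
  also have "of_int j * w = complex_of_real (of_int j * ln (cmod z))
      + 2 * pi * \<i> * of_int j * of_real (Arg z / (2 * pi))"
    unfolding w_def by (simp add: algebra_simps)
  finally show ?thesis unfolding ee_def by (simp add: exp_add flip: exp_of_real)
qed

lemma Gamma_minus_slice:
  assumes "trig2 c" and "z \<noteq> 0"
  shows "cmod (tval1 (Gamma z c) y - tval2 c (Arg z / (2 * pi)) y)
    \<le> (\<Sum>p\<in>{p. c p \<noteq> 0}. cmod (c p) * \<bar>exp (of_int (fst p) * ln (cmod z)) - 1\<bar>)"
proof -
  define x0 where "x0 = Arg z / (2 * pi)"
  define f where "f p = exp (of_int (fst p) * ln (cmod z))" for p :: "int \<times> int"
  have "tval1 (Gamma z c) y - tval2 c x0 y
      = (\<Sum>p\<in>{p. c p \<noteq> 0}. c p * complex_of_real (f p - 1) * ee (fst p) x0 * ee (snd p) y)"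
    unfolding tval1_Gamma[OF assms(1)] tval2_def powi_polar[OF assms(2)] x0_def f_def
    by (simp add: sum_subtractf[symmetric] algebra_simps)
  also have "cmod \<dots> \<le> (\<Sum>p\<in>{p. c p \<noteq> 0}. cmod (c p) * \<bar>f p - 1\<bar>)"
    by (rule order.trans[OF norm_sum])
      (simp only: norm_mult norm_of_real norm_ee mult_1_right order_refl)
  finally show ?thesis unfolding x0_def f_def .
qed

lemma exp_minus_one_bound: "\<bar>exp u - 1\<bar> \<le> \<bar>u\<bar> * exp \<bar>u\<bar>" for u :: real
proof (cases "u \<ge> 0")
  case True
  have "(1 - u) * exp u \<le> exp (-u) * exp u"
    using exp_ge_add_one_self[of "-u"] by (intro mult_right_mono) auto
  then have "(1 - u) * exp u \<le> 1" by (simp add: exp_minus field_simps)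
  with True show ?thesis by (simp add: algebra_simps)
next
  case False
  have "1 + u \<le> exp u" "exp u \<le> 1" "1 \<le> exp \<bar>u\<bar>"
    using exp_ge_add_one_self[of u] False by auto
  with False show ?thesis by (smt (verit, best) mult_le_cancel_left1)
qed

lemma annulus_log_bound:
  assumes "z \<in> annulus \<sigma>"
  shows "z \<noteq> 0" and "\<bar>ln (cmod z)\<bar> \<le> \<sigma>"
proof -
  have lo: "exp (- \<sigma>) \<le> cmod z" and hi: "cmod z \<le> exp \<sigma>"
    using assms unfolding annulus_def by auto
  then have pos: "cmod z > 0" by (smt (verit) exp_gt_zero)
  then show "z \<noteq> 0" by auto
  have "- \<sigma> \<le> ln (cmod z)" using lo pos by (simp add: ln_ge_iff)
  moreover have "ln (cmod z) \<le> \<sigma>" using hi pos by (metis exp_gt_zero ln_exp ln_le_cancel_iff)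
  ultimately show "\<bar>ln (cmod z)\<bar> \<le> \<sigma>" by simp
qed

text \<open>On the annulus of radius sigma_1(t), every frequency j in the support of t
  satisfies |j ln |z|| <= rho(t); this is what the choice sigma_1 = rho / n_1 is for.\<close>

lemma annulus_exponent_bound:
  assumes "trig2 c" and "n1 c \<ge> 1" and "z \<in> annulus (sigma1 c)" and "c p \<noteq> 0"
  shows "\<bar>of_int (fst p) * ln (cmod z)\<bar> \<le> rho2 c"
proof -
  have "\<bar>fst p\<bar> \<le> n1 c"
    unfolding n1_def using assms(1,4) unfolding trig2_def by (auto intro!: Max_ge)
  then have "\<bar>of_int (fst p) * ln (cmod z)\<bar> \<le> of_int (n1 c) * sigma1 c"
    using annulus_log_bound(2)[OF assms(3)] assms(2)
    by (simp add: abs_mult mult_mono)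
  also have "\<dots> = rho2 c" using assms(2) unfolding sigma1_def by simp
  finally show ?thesis .
qed

lemma Gamma_close_to_slice:
  assumes "trig2 c" and "\<forall>x y. Re (tval2 c x y) > 0"
    and "n1 c \<ge> 1" and "z \<in> annulus (sigma1 c)"
  shows "cmod (tval1 (Gamma z c) y - tval2 c (Arg z / (2 * pi)) y) \<le> min2 c / 2"
proof -
  have m: "0 \<le> min2 c" using min2_bounds(1)[OF assms(2)] .
  have factor: "\<bar>exp (of_int (fst p) * ln (cmod z)) - 1\<bar> \<le> rho2 c * exp 1"
    if "c p \<noteq> 0" for p
  proof -
    let ?u = "of_int (fst p) * ln (cmod z)"
    have u: "\<bar>?u\<bar> \<le> rho2 c"
      using annulus_exponent_bound[OF assms(1,3,4) that] .
    have "\<bar>exp ?u - 1\<bar> \<le> \<bar>?u\<bar> * exp \<bar>?u\<bar>" by (rule exp_minus_one_bound)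
    also have "\<dots> \<le> rho2 c * exp 1"
      using u rho2_le_one[of c] by (intro mult_mono) auto
    finally show ?thesis .
  qed
  have "cmod (tval1 (Gamma z c) y - tval2 c (Arg z / (2 * pi)) y)
      \<le> (\<Sum>p\<in>{p. c p \<noteq> 0}. cmod (c p) * (rho2 c * exp 1))"
    using Gamma_minus_slice[OF assms(1) annulus_log_bound(1)[OF assms(4)]]
    by (rule order.trans) (auto intro!: sum_mono mult_left_mono factor)
  also have "\<dots> = l1norm2 c * (rho2 c * exp 1)"
    unfolding l1norm2_def by (simp add: sum_distrib_right)
  also have "\<dots> \<le> min2 c / 2" using rho2_budget[OF m] .
  finally show ?thesis .
qed

lemma l1norm1_Gamma_annulus:
  assumes "trig2 c" and "n1 c \<ge> 1" and "z \<in> annulus (sigma1 c)"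
  shows "l1norm1 (Gamma z c) \<le> exp 1 * l1norm2 c"
proof -
  have z: "z \<noteq> 0" using annulus_log_bound(1)[OF assms(3)] .
  have "cmod (z powi fst p) \<le> exp 1" if "c p \<noteq> 0" for p
    using annulus_exponent_bound[OF assms that] rho2_le_one[of c]
    by (simp add: powi_polar[OF z] norm_mult)
  then have "(\<Sum>p\<in>{p. c p \<noteq> 0}. cmod (c p) * cmod (z powi fst p))
      \<le> (\<Sum>p\<in>{p. c p \<noteq> 0}. cmod (c p) * exp 1)"
    by (intro sum_mono mult_left_mono) auto
  then show ?thesis
    using l1norm1_Gamma_le[OF assms(1), of z]
    unfolding l1norm2_def by (simp add: sum_distrib_left mult.commute)
qed

lemma supnorm1_le:
  assumes "\<And>y. cmod (tval1 d y) \<le> B"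
  shows "supnorm1 d \<le> B"
  unfolding supnorm1_def by (rule cSUP_least) (use assms in auto)

lemma rho1_lower_bound:
  assumes m: "0 \<le> min2 c" "min2 c \<le> l1norm2 c"
    and re: "\<And>y. min2 c / 2 \<le> Re (tval1 d y)"
    and l1: "l1norm1 d \<le> exp 1 * l1norm2 c"
  shows "rho2 c / (2 * exp 1) \<le> rho1 d"
proof (cases "min2 c = 0")
  case True
  have "0 \<le> minRe1 d" unfolding minRe1_def by (rule cINF_greatest) (use re True in auto)
  then show ?thesis
    using True l1norm1_nonneg[of d] unfolding rho1_def rho2_def by simp
next
  case False
  let ?m = "min2 c" and ?L = "l1norm2 c" and ?M1 = "minRe1 d" and ?L1 = "l1norm1 d"
  have mp: "?m > 0" using False m(1) by simp
  have M1: "?m / 2 \<le> ?M1" unfolding minRe1_def by (rule cINF_greatest) (use re in auto)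
  have L1p: "?L1 > 0"
    using re[of 0] norm_tval1_le_l1norm1[of d 0] abs_Re_le_cmod[of "tval1 d 0"] mp by linarith
  have "rho2 c / (2 * exp 1) \<le> (?m / (2 * exp 1 * ?L)) / (2 * exp 1)"
    unfolding rho2_def by (intro divide_right_mono) auto
  also have "\<dots> = (?m / 2) / (2 * exp 1 * (exp 1 * ?L))" by (simp add: field_simps)
  also have "\<dots> \<le> ?M1 / (2 * exp 1 * ?L1)"
    using M1 l1 L1p mp m(2) by (intro frac_le mult_left_mono) auto
  finally have "rho2 c / (2 * exp 1) \<le> ?M1 / (2 * exp 1 * ?L1)" .
  moreover have "rho2 c \<le> 2 * exp 1"
    using rho2_le_one[of c] one_le_exp_iff[of 1] by linarith
  then have "rho2 c / (2 * exp 1) \<le> 1" by simp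
  ultimately show ?thesis unfolding rho1_def by simp
qed

theorem mainTheorem11:
  fixes c :: "int \<times> int \<Rightarrow> complex" and z :: complex
  assumes "trig2 c"
    and "\<forall>x y. Im (tval2 c x y) = 0 \<and> Re (tval2 c x y) > 0"
    and "n1 c \<ge> 1"
    and "z \<in> annulus (sigma1 c)"
  shows "(\<forall>y. Re (tval1 (Gamma z c) y) \<ge> min2 c / 2)
    \<and> supnorm1 (Gamma z c) \<le> supnorm2 c + min2 c / 2
    \<and> rho1 (Gamma z c) \<ge> rho2 c / (2 * exp 1)"
proof -
  have pos: "\<forall>x y. Re (tval2 c x y) > 0" using assms(2) by blast
  define x0 where "x0 = Arg z / (2 * pi)"
  have close: "cmod (tval1 (Gamma z c) y - tval2 c x0 y) \<le> min2 c / 2" for y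
    unfolding x0_def using Gamma_close_to_slice[OF assms(1) pos assms(3,4)] .
  have re: "min2 c / 2 \<le> Re (tval1 (Gamma z c) y)" for y
    using close[of y] min2_bounds(2)[OF pos, of x0 y]
      abs_Re_le_cmod[of "tval1 (Gamma z c) y - tval2 c x0 y"] by simp
  have "cmod (tval1 (Gamma z c) y) \<le> supnorm2 c + min2 c / 2" for y
    using close[of y] norm_tval2_le_supnorm2[of c x0 y]
      norm_triangle_ineq2[of "tval1 (Gamma z c) y" "tval2 c x0 y"] by linarith
  then have sup: "supnorm1 (Gamma z c) \<le> supnorm2 c + min2 c / 2"
    by (rule supnorm1_le)
  have "rho2 c / (2 * exp 1) \<le> rho1 (Gamma z c)"
    using min2_bounds(1)[OF pos] min2_le_l1norm2[OF pos] re
      l1norm1_Gamma_annulus[OF assms(1,3,4)]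
    by (rule rho1_lower_bound)
  with re sup show ?thesis by blast
qed

end
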